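(* Let $U$ be a nonempty open subset of $\mathbb{R}^n$, let $L>0$, and let $g:\mathbb{R}^n\to\mathbb{R}$ be differentiable on $U$ and satisfy $0\le g(y)-g(x)-\langle\nabla g(x),y-x\rangle\le L\|y-x\|^2$ for all $y\in\mathbb{R}^n$ and all $x\in U$. Then $(2L)^{-1}\nabla g$ is firmly nonexpansive on $U$, i.e. $(2L)^{-1}\|\nabla g(y)-\nabla g(x)\|^2\le\langle\nabla g(x)-\nabla g(y),x-y\rangle$ for all $x,y\in U$. *)

theory Defs
  imports "HOL-Analysis.Analysis"
begin

end

theory Submission
  imports Defs
begin

text \<open>
  Write \<open>D(x, y) = g y - g x - G x \<bullet> (y - x)\<close>. Comparing the lower bound \<open>D(x, z) \<ge> 0\<close> with
  the upper bound \<open>D(y, z) \<le> L \<parallel>z - y\<parallel>\<^sup>2\<close> at the point \<open>z = y - (G y - G x) / (2L)\<close>, a gradient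
  step from \<open>y\<close>, gives \<open>D(x, y) \<ge> \<parallel>G y - G x\<parallel>\<^sup>2 / (4L)\<close>. Adding this to the same bound with
  \<open>x\<close> and \<open>y\<close> exchanged yields the claim, since \<open>D(x, y) + D(y, x) = (G x - G y) \<bullet> (x - y)\<close>.
  The bounds are assumed for all \<open>z\<close>, not only in \<open>U\<close>.
\<close>

lemma bregman_ge_gradient_gap:
  fixes g :: "'a::real_inner \<Rightarrow> real" and G :: "'a \<Rightarrow> 'a"
  assumes "L > 0"
    and lower: "\<And>z. 0 \<le> g z - g x - G x \<bullet> (z - x)"
    and upper: "\<And>z. g z - g y - G y \<bullet> (z - y) \<le> L * (norm (z - y))\<^sup>2"
  shows "(norm (G y - G x))\<^sup>2 / (4 * L) \<le> g y - g x - G x \<bullet> (y - x)"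
proof -
  define c where "c = 1 / (2 * L)"
  define d where "d = G y - G x"
  define z where "z = y - c *\<^sub>R d"
  have "0 \<le> g z - g x - G x \<bullet> (z - x)"
    by (rule lower)
  moreover have "g z - g y - G y \<bullet> (z - y) \<le> L * (norm (z - y))\<^sup>2"
    by (rule upper)
  moreover have "G x \<bullet> (z - x) = G x \<bullet> (y - x) - c * (G x \<bullet> d)"
    by (simp add: z_def inner_diff_right algebra_simps)
  moreover have "G y \<bullet> (z - y) = - c * (G y \<bullet> d)"
    by (simp add: z_def)
  moreover have "(norm (z - y))\<^sup>2 = c\<^sup>2 * (norm d)\<^sup>2"
    by (simp add: z_def power_mult_distrib)
  ultimately have "0 \<le> g y - g x - G x \<bullet> (y - x) - c * (G y \<bullet> d - G x \<bullet> d) + L * c\<^sup>2 * (norm d)\<^sup>2"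
    by (simp add: algebra_simps)
  moreover have "G y \<bullet> d - G x \<bullet> d = (norm d)\<^sup>2"
    by (simp add: d_def inner_diff_left power2_norm_eq_inner)
  moreover have "c * (norm d)\<^sup>2 - L * c\<^sup>2 * (norm d)\<^sup>2 = (norm d)\<^sup>2 / (4 * L)"
    using \<open>L > 0\<close> by (simp add: c_def power2_eq_square field_simps)
  ultimately show ?thesis
    by (simp add: d_def)
qed

lemma gradient_cocoercive:
  fixes g :: "'a::real_inner \<Rightarrow> real" and G :: "'a \<Rightarrow> 'a"
  assumes "L > 0"
    and bounds: "\<And>x z. x \<in> U \<Longrightarrow>
        0 \<le> g z - g x - G x \<bullet> (z - x) \<and> g z - g x - G x \<bullet> (z - x) \<le> L * (norm (z - x))\<^sup>2"
    and "x \<in> U" "y \<in> U"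
  shows "(1 / (2 * L)) * (norm (G y - G x))\<^sup>2 \<le> (G x - G y) \<bullet> (x - y)"
proof -
  have xy: "(norm (G y - G x))\<^sup>2 / (4 * L) \<le> g y - g x - G x \<bullet> (y - x)"
    using bregman_ge_gradient_gap[OF \<open>L > 0\<close>] bounds \<open>x \<in> U\<close> \<open>y \<in> U\<close> by blast
  have yx: "(norm (G y - G x))\<^sup>2 / (4 * L) \<le> g x - g y - G y \<bullet> (x - y)"
    using bregman_ge_gradient_gap[OF \<open>L > 0\<close>] bounds \<open>x \<in> U\<close> \<open>y \<in> U\<close>
    by (metis norm_minus_commute)
  have "(G x - G y) \<bullet> (x - y) = - (G x \<bullet> (y - x)) - G y \<bullet> (x - y)"
    by (simp add: inner_diff_left inner_diff_right algebra_simps)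
  moreover have "(1 / (2 * L)) * (norm (G y - G x))\<^sup>2 = 2 * ((norm (G y - G x))\<^sup>2 / (4 * L))"
    using \<open>L > 0\<close> by (simp add: field_simps)
  ultimately show ?thesis
    using xy yx by linarith
qed

theorem mainTheorem14:
  fixes U :: "(real ^ 'n) set" and L :: real
    and g :: "real ^ 'n \<Rightarrow> real" and G :: "real ^ 'n \<Rightarrow> real ^ 'n"
  assumes "open U" and "U \<noteq> {}" and "L > 0"
    and grad: "\<And>x. x \<in> U \<Longrightarrow> (g has_derivative (\<lambda>h. G x \<bullet> h)) (at x)"
    and bounds: "\<And>x y. x \<in> U \<Longrightarrow>
        0 \<le> g y - g x - G x \<bullet> (y - x) \<and> g y - g x - G x \<bullet> (y - x) \<le> L * (norm (y - x))\<^sup>2"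
  shows "\<forall>x\<in>U. \<forall>y\<in>U. (1 / (2 * L)) * (norm (G y - G x))\<^sup>2 \<le> (G x - G y) \<bullet> (x - y)"
  using gradient_cocoercive[OF \<open>L > 0\<close> bounds] by blast

end
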